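(* Let $\mathcal G\subseteq\mathsf P^n$ be the gauge group of an $n$-qubit subsystem code, with stabilizer group $\mathcal S=\mathcal G^\perp\cap\mathcal G$, dressed logical operators $\mathcal S^\perp$, and distance $d$, the minimal weight of an element of $\mathcal S^\perp\setminus\mathcal G$. Let $\Gamma\subseteq 2^{[n]}$ with $|\gamma|\le\lfloor\frac{d-1}{2}\rfloor$ for all $\gamma\in\Gamma$, and let $P=\mathop{\ast}_{\gamma\in\Gamma}P_\gamma$ where each $P_\gamma$ is a probability distribution on $\mathsf P^n$ supported on Paulis with support in $\gamma$ and with $P_\gamma(I)>\tfrac12$. Then the logical channel $P_L(e)=\frac1{|\mathcal G|}\sum_{g\in\mathcal G}P(eg)$ is uniquely determined by the stabilizer measurement statistics $E(s)=\sum_{e\in\mathsf P^n}\langle s,e\rangle P(e)$, $s\in\mathcal S$ (among all channels of this form with the same $\Gamma$).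
   Context: $\mathsf P^n$ is the $n$-qubit Pauli group modulo phases; $\langle a,e\rangle=+1$ if $a,e$ commute and $-1$ otherwise; $B^\perp=\{a:\langle a,b\rangle=1\ \forall b\in B\}$. A subsystem code is specified by an arbitrary subgroup $\mathcal G\subseteq\mathsf P^n$ (not necessarily with $\mathcal G\subseteq\mathcal G^\perp$). Weight and support of a Pauli: number/set of qubits on which it acts nontrivially. Phenomenological noise: in each round an independent error $e\sim P$ occurs and the measurement of $s\in\mathcal S$ yields $\langle s,e\rangle$. Convolution: $(f\ast g)(e)=\sum_{e'}f(e')g(ee')$. *)

theory Defs
  imports Complex_Main "HOL-Library.Extended_Nat" "HOL-Library.FuncSet"
begin

text \<open>An n-qubit Pauli modulo phases: on qubit i, the pair (x_i, z_i) of bits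
  (I = (F,F), X = (T,F), Z = (F,T), Y = (T,T)); qubits i >= n carry I.\<close>
type_synonym pauli = "nat \<Rightarrow> bool \<times> bool"

definition pI :: pauli where "pI = (\<lambda>i. (False, False))"

definition paulis :: "nat \<Rightarrow> pauli set" where
  "paulis n = {a. \<forall>i\<ge>n. a i = (False, False)}"

definition pmult :: "pauli \<Rightarrow> pauli \<Rightarrow> pauli" where
  "pmult a b = (\<lambda>i. (fst (a i) \<noteq> fst (b i), snd (a i) \<noteq> snd (b i)))"

text \<open>Product of a finite family of Paulis (the group is abelian mod phases).\<close>
definition pprod :: "'i set \<Rightarrow> ('i \<Rightarrow> pauli) \<Rightarrow> pauli" where
  "pprod A f = (\<lambda>i. (odd (card {k\<in>A. fst (f k i)}), odd (card {k\<in>A. snd (f k i)})))"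

definition psupp :: "pauli \<Rightarrow> nat set" where
  "psupp a = {i. a i \<noteq> (False, False)}"

definition pweight :: "pauli \<Rightarrow> nat" where
  "pweight a = card (psupp a)"

definition comm :: "nat \<Rightarrow> pauli \<Rightarrow> pauli \<Rightarrow> real" where
  "comm n a e = (if even (card {i. i < n \<and> ((fst (a i) \<and> snd (e i)) \<noteq> (snd (a i) \<and> fst (e i)))})
                 then 1 else -1)"

definition perp :: "nat \<Rightarrow> pauli set \<Rightarrow> pauli set" where
  "perp n B = {a \<in> paulis n. \<forall>b\<in>B. comm n a b = 1}"

definition pauli_subgroup :: "nat \<Rightarrow> pauli set \<Rightarrow> bool" where
  "pauli_subgroup n G \<longleftrightarrow> G \<subseteq> paulis n \<and> pI \<in> G \<and> (\<forall>a\<in>G. \<forall>b\<in>G. pmult a b \<in> G)"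

definition stabilizer :: "nat \<Rightarrow> pauli set \<Rightarrow> pauli set" where
  "stabilizer n G = perp n G \<inter> G"

definition dressed :: "nat \<Rightarrow> pauli set \<Rightarrow> pauli set" where
  "dressed n G = perp n (stabilizer n G)"

text \<open>Distance: minimal weight of an element of S^perp - G (infinite if that set is empty).\<close>
definition code_distance :: "nat \<Rightarrow> pauli set \<Rightarrow> enat" where
  "code_distance n G = (INF a \<in> dressed n G - G. enat (pweight a))"

definition prob_dist :: "nat \<Rightarrow> (pauli \<Rightarrow> real) \<Rightarrow> bool" where
  "prob_dist n p \<longleftrightarrow> (\<forall>e. p e \<ge> 0) \<and> (\<forall>e. e \<notin> paulis n \<longrightarrow> p e = 0)
                      \<and> (\<Sum>e\<in>paulis n. p e) = 1"

text \<open>Convolution of the finite family (Q gamma)_{gamma in Gamma}, written out: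
  sum over all choices e_gamma with product e of prod_gamma Q gamma e_gamma.\<close>
definition conv_family :: "nat \<Rightarrow> 'i set \<Rightarrow> ('i \<Rightarrow> pauli \<Rightarrow> real) \<Rightarrow> pauli \<Rightarrow> real" where
  "conv_family n \<Gamma> Q e =
     (\<Sum>f\<in>PiE \<Gamma> (\<lambda>_. paulis n). if pprod \<Gamma> f = e then (\<Prod>\<gamma>\<in>\<Gamma>. Q \<gamma> (f \<gamma>)) else 0)"

definition logical_channel :: "pauli set \<Rightarrow> (pauli \<Rightarrow> real) \<Rightarrow> pauli \<Rightarrow> real" where
  "logical_channel G P e = (1 / real (card G)) * (\<Sum>g\<in>G. P (pmult e g))"

definition syndrome_stats :: "nat \<Rightarrow> (pauli \<Rightarrow> real) \<Rightarrow> pauli \<Rightarrow> real" where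
  "syndrome_stats n P s = (\<Sum>e\<in>paulis n. comm n s e * P e)"

definition local_family :: "nat \<Rightarrow> nat set set \<Rightarrow> (nat set \<Rightarrow> pauli \<Rightarrow> real) \<Rightarrow> bool" where
  "local_family n \<Gamma> Q \<longleftrightarrow> (\<forall>\<gamma>\<in>\<Gamma>. prob_dist n (Q \<gamma>)
       \<and> (\<forall>e. \<not> psupp e \<subseteq> \<gamma> \<longrightarrow> Q \<gamma> e = 0) \<and> Q \<gamma> pI > 1/2)"

end

theory Submission
  imports Defs
begin

(* The syndrome statistics E = syndrome_stats n P are the Fourier transform of P on the
   Pauli group, and Poisson summation over G shows that the logical channel only depends on
   E restricted to G^perp. For P the convolution of the P_gamma, E is the product of the
   transforms E_gamma, each positive (as P_gamma(I) > 1/2) and depending only on the qubits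
   in gamma. So L = sum_gamma (ln E_gamma - ln E'_gamma) is a sum of gamma-local functions
   vanishing on the stabilizer S, and it suffices to show that L vanishes on G^perp.
   The Fourier transform of L is supported on Paulis of weight at most (d-1)/2, and L = 0 on S
   says that it sums to zero over each coset of S^perp. Two Paulis in its support lying in
   the same coset differ by a dressed operator of weight < d, that is by a gauge operator,
   so each a in G^perp has the same commutation sign with both; hence the inversion formula
   for L(a) is a sum of coset sums and vanishes. *)

section \<open>The Pauli group modulo phases\<close>

lemma pmult_commute: "pmult a b = pmult b a"
  by (auto simp: pmult_def)

lemma pmult_cancel_left [simp]: "pmult a (pmult a b) = b"
  by (auto simp: pmult_def fun_eq_iff prod_eq_iff)

lemma pmult_self [simp]: "pmult a a = pI"
  by (simp add: pmult_def pI_def)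

lemma pmult_eq_pI_iff: "pmult a b = pI \<longleftrightarrow> a = b"
  by (auto simp: pmult_def pI_def fun_eq_iff prod_eq_iff)

lemma pI_in_paulis [simp]: "pI \<in> paulis n"
  by (simp add: paulis_def pI_def)

lemma pmult_in_paulis [simp]: "a \<in> paulis n \<Longrightarrow> b \<in> paulis n \<Longrightarrow> pmult a b \<in> paulis n"
  by (auto simp: paulis_def pmult_def)

lemma psupp_pmult_subset: "psupp (pmult a b) \<subseteq> psupp a \<union> psupp b"
  by (auto simp: psupp_def pmult_def)

lemma finite_paulis [simp]: "finite (paulis n)"
proof (rule finite_subset)
  let ?extend = "\<lambda>f i. if i < n then f i else (False, False)"
  show "paulis n \<subseteq> ?extend ` (PiE {..<n} (\<lambda>_. UNIV))"
  proof
    fix a assume "a \<in> paulis n"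
    then have "a = ?extend (restrict a {..<n})"
      by (auto simp: paulis_def fun_eq_iff)
    moreover have "restrict a {..<n} \<in> PiE {..<n} (\<lambda>_. UNIV)"
      by simp
    ultimately show "a \<in> ?extend ` (PiE {..<n} (\<lambda>_. UNIV))"
      by (rule image_eqI)
  qed
qed (simp add: finite_PiE)

lemma paulis_ne_empty [simp]: "paulis n \<noteq> {}"
  using pI_in_paulis by blast

definition anticommute_at :: "pauli \<Rightarrow> pauli \<Rightarrow> nat \<Rightarrow> bool" where
  "anticommute_at a e i \<longleftrightarrow> (fst (a i) \<and> snd (e i)) \<noteq> (snd (a i) \<and> fst (e i))"

lemma comm_eq_power: "comm n a e = (-1) ^ card {i. i < n \<and> anticommute_at a e i}"
  by (simp add: comm_def anticommute_at_def minus_one_power_iff)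

lemma comm_eq_prod: "comm n a e = (\<Prod>i<n. if anticommute_at a e i then -1 else 1)"
proof -
  have "{..<n} \<inter> {i. anticommute_at a e i} = {i. i < n \<and> anticommute_at a e i}"
    by auto
  then show ?thesis
    by (simp add: prod.If_cases comm_eq_power)
qed

lemma comm_commute: "comm n a e = comm n e a"
  unfolding comm_eq_prod anticommute_at_def by (intro prod.cong) auto

lemma comm_pmult_right: "comm n a (pmult e f) = comm n a e * comm n a f"
  unfolding comm_eq_prod prod.distrib[symmetric]
  by (intro prod.cong) (auto simp: anticommute_at_def pmult_def)

lemma comm_pmult_left: "comm n (pmult e f) a = comm n e a * comm n f a"
  using comm_pmult_right comm_commute by metis

lemma comm_cases: "comm n a e = 1 \<or> comm n a e = -1"
  by (simp add: comm_def)

lemma comm_pI_right [simp]: "comm n a pI = 1"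
  by (simp add: comm_def pI_def)

lemma comm_pI_left [simp]: "comm n pI a = 1"
  by (simp add: comm_def pI_def)

lemma comm_cong_psupp:
  assumes "\<forall>i\<in>psupp e. a i = b i"
  shows "comm n a e = comm n b e"
proof -
  have "anticommute_at a e i = anticommute_at b e i" for i
    using assms by (cases "i \<in> psupp e") (auto simp: anticommute_at_def psupp_def)
  then show ?thesis
    by (simp add: comm_eq_power)
qed

lemma exists_anticommuting_single_qubit:
  assumes "i < n" "i \<in> psupp x"
  obtains y where "y \<in> paulis n" "comm n y x = -1" "psupp y \<subseteq> {i}"
proof
  define y :: pauli where
    "y = (\<lambda>j. if j = i then (if fst (x i) then (False, True) else (True, False)) else (False, False))"
  show "y \<in> paulis n" "psupp y \<subseteq> {i}"
    using assms by (auto simp: y_def paulis_def psupp_def)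
  have "{j. j < n \<and> anticommute_at y x j} = {i}"
    using assms by (auto simp: y_def anticommute_at_def psupp_def prod_eq_iff)
  then show "comm n y x = -1"
    by (simp add: comm_eq_power)
qed

lemma pprod_empty [simp]: "pprod {} f = pI"
  by (simp add: pprod_def pI_def)

lemma pprod_insert:
  assumes "finite A" "x \<notin> A"
  shows "pprod (insert x A) f = pmult (f x) (pprod A f)"
proof -
  have "odd (card {k\<in>insert x A. Q k}) = (Q x \<noteq> odd (card {k\<in>A. Q k}))" for Q
  proof (cases "Q x")
    case True
    then have "{k\<in>insert x A. Q k} = insert x {k\<in>A. Q k}" by auto
    then show ?thesis using assms True by simp
  next
    case False
    then have "{k\<in>insert x A. Q k} = {k\<in>A. Q k}" by auto
    then show ?thesis using False by simp
  qed
  then show ?thesis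
    by (simp add: pprod_def pmult_def)
qed

lemma comm_pprod: "finite A \<Longrightarrow> comm n a (pprod A f) = (\<Prod>k\<in>A. comm n a (f k))"
  by (induction A rule: finite_induct) (simp_all add: pprod_insert comm_pmult_right)

lemma pprod_in_paulis:
  assumes "\<forall>k\<in>A. f k \<in> paulis n"
  shows "pprod A f \<in> paulis n"
proof -
  have empty: "{k\<in>A. fst (f k i)} = {}" "{k\<in>A. snd (f k i)} = {}" if "i \<ge> n" for i
    using assms that by (auto simp: paulis_def)
  show ?thesis
    unfolding pprod_def paulis_def by (simp add: empty)
qed

section \<open>Fourier analysis on the Pauli group\<close>

lemma pauli_subgroup_paulis: "pauli_subgroup n (paulis n)"
  by (auto simp: pauli_subgroup_def)

lemma pauli_subgroup_finite: "pauli_subgroup n H \<Longrightarrow> finite H"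
  unfolding pauli_subgroup_def using finite_subset finite_paulis by blast

lemma pauli_subgroup_card_pos: "pauli_subgroup n H \<Longrightarrow> card H > 0"
  using pauli_subgroup_finite by (auto simp: pauli_subgroup_def card_gt_0_iff)

lemma perp_subset_paulis: "perp n B \<subseteq> paulis n"
  by (auto simp: perp_def)

lemma pauli_subgroup_perp: "pauli_subgroup n (perp n B)"
  by (auto simp: pauli_subgroup_def perp_def comm_pmult_left)

lemma pauli_subgroup_stabilizer:
  "pauli_subgroup n G \<Longrightarrow> pauli_subgroup n (stabilizer n G)"
  using pauli_subgroup_perp[of n G] by (auto simp: pauli_subgroup_def stabilizer_def)

lemma sum_subgroup_shift:
  assumes "pauli_subgroup n H" "y \<in> H"
  shows "(\<Sum>b\<in>H. g (pmult y b)) = (\<Sum>b\<in>H. g b)"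
  by (rule sum.reindex_bij_witness[of _ "pmult y" "pmult y"])
     (use assms in \<open>auto simp: pauli_subgroup_def\<close>)

lemma sum_comm_subgroup:
  assumes H: "pauli_subgroup n H" and y: "y \<in> paulis n"
  shows "(\<Sum>h\<in>H. comm n y h) = (if y \<in> perp n H then real (card H) else 0)"
proof (cases "y \<in> perp n H")
  case True
  then show ?thesis by (simp add: perp_def)
next
  case False
  then obtain h0 where h0: "h0 \<in> H" "comm n y h0 = -1"
    using y comm_cases by (auto simp: perp_def)
  have "(\<Sum>h\<in>H. comm n y h) = (\<Sum>h\<in>H. comm n y (pmult h0 h))"
    by (rule sum_subgroup_shift[OF H h0(1), symmetric])
  also have "\<dots> = - (\<Sum>h\<in>H. comm n y h)"
    by (simp add: comm_pmult_right h0(2) sum_negf)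
  finally show ?thesis
    using False by simp
qed

lemma perp_paulis: "perp n (paulis n) = {pI}"
proof -
  have "x = pI" if x: "x \<in> perp n (paulis n)" for x
  proof (rule ccontr)
    assume "x \<noteq> pI"
    then obtain i where i: "i \<in> psupp x"
      by (auto simp: pI_def psupp_def fun_eq_iff)
    with x have "i < n"
      by (auto simp: perp_def paulis_def psupp_def not_less[symmetric])
    from this i obtain y where "y \<in> paulis n" "comm n y x = -1"
      by (rule exists_anticommuting_single_qubit)
    with x show False
      by (auto simp: perp_def comm_commute[of n x y])
  qed
  then show ?thesis
    by (auto simp: perp_def)
qed

lemma sum_comm_paulis:
  assumes "x \<in> paulis n"
  shows "(\<Sum>c\<in>paulis n. comm n c x) = (if x = pI then real (card (paulis n)) else 0)"
  using sum_comm_subgroup[OF pauli_subgroup_paulis assms]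
  by (simp add: comm_commute[of n x] perp_paulis)

lemma syndrome_stats_inversion:
  assumes x: "x \<in> paulis n"
  shows "(\<Sum>c\<in>paulis n. syndrome_stats n f c * comm n c x) = real (card (paulis n)) * f x"
proof -
  have "(\<Sum>c\<in>paulis n. syndrome_stats n f c * comm n c x)
      = (\<Sum>e\<in>paulis n. f e * (\<Sum>c\<in>paulis n. comm n c (pmult e x)))"
    unfolding syndrome_stats_def sum_distrib_left sum_distrib_right
    by (subst sum.swap) (simp add: comm_pmult_right mult_ac)
  also have "\<dots> = (\<Sum>e\<in>paulis n. if e = x then real (card (paulis n)) * f x else 0)"
    using x by (intro sum.cong) (auto simp: sum_comm_paulis pmult_eq_pI_iff)
  finally show ?thesis
    using x by simp
qed

lemma poisson_summation:
  assumes H: "pauli_subgroup n H"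
  shows "real (card (paulis n)) * (\<Sum>s\<in>H. f s) = real (card H) * (\<Sum>c\<in>perp n H. syndrome_stats n f c)"
proof -
  have HP: "H \<subseteq> paulis n"
    using H by (simp add: pauli_subgroup_def)
  have "real (card (paulis n)) * (\<Sum>s\<in>H. f s)
      = (\<Sum>s\<in>H. \<Sum>c\<in>paulis n. syndrome_stats n f c * comm n c s)"
    unfolding sum_distrib_left using HP by (intro sum.cong) (auto simp: syndrome_stats_inversion)
  also have "\<dots> = (\<Sum>c\<in>paulis n. syndrome_stats n f c * (\<Sum>s\<in>H. comm n c s))"
    by (subst sum.swap) (simp add: sum_distrib_left)
  also have "\<dots> = (\<Sum>c\<in>paulis n. if c \<in> perp n H then real (card H) * syndrome_stats n f c else 0)"
    by (intro sum.cong) (simp_all add: sum_comm_subgroup[OF H])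
  also have "\<dots> = real (card H) * (\<Sum>c\<in>perp n H. syndrome_stats n f c)"
    using perp_subset_paulis
    by (simp add: sum.If_cases Int_absorb1 sum_distrib_left)
  finally show ?thesis .
qed

lemma syndrome_stats_translate:
  assumes "x \<in> paulis n"
  shows "syndrome_stats n (\<lambda>e. f (pmult x e)) c = comm n c x * syndrome_stats n f c"
proof -
  have "syndrome_stats n (\<lambda>e. f (pmult x e)) c = (\<Sum>e\<in>paulis n. comm n c (pmult x e) * f e)"
    using sum_subgroup_shift[OF pauli_subgroup_paulis assms, where g = "\<lambda>e. comm n c e * f (pmult x e)"]
    by (simp add: syndrome_stats_def)
  then show ?thesis
    by (simp add: syndrome_stats_def comm_pmult_right sum_distrib_left mult.assoc)
qed

lemma syndrome_stats_modulate:
  "syndrome_stats n (\<lambda>e. comm n x e * f e) c = syndrome_stats n f (pmult c x)"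
  by (simp add: syndrome_stats_def comm_pmult_left mult.assoc)

lemma syndrome_stats_sum:
  "syndrome_stats n (\<lambda>e. \<Sum>k\<in>I. f k e) c = (\<Sum>k\<in>I. syndrome_stats n (f k) c)"
  unfolding syndrome_stats_def sum_distrib_left by (rule sum.swap)

section \<open>Local functions and local noise\<close>

lemma syndrome_stats_eq_0_if_local:
  assumes loc: "\<And>a b. \<forall>i\<in>\<gamma>. a i = b i \<Longrightarrow> f a = f b"
    and c: "c \<in> paulis n" "\<not> psupp c \<subseteq> \<gamma>"
  shows "syndrome_stats n f c = 0"
proof -
  obtain i where i: "i \<in> psupp c" "i \<notin> \<gamma>"
    using c(2) by blast
  with c(1) have "i < n"
    by (auto simp: paulis_def psupp_def not_less[symmetric])
  from this i(1) obtain y where y: "y \<in> paulis n" "comm n y c = -1" "psupp y \<subseteq> {i}"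
    by (rule exists_anticommuting_single_qubit)
  have "y j = (False, False)" if "j \<in> \<gamma>" for j
    using y(3) i(2) that by (auto simp: psupp_def)
  then have "f (pmult y e) = f e" for e
    by (intro loc) (simp add: pmult_def)
  then have "syndrome_stats n f c = syndrome_stats n (\<lambda>e. f (pmult y e)) c"
    by simp
  also have "\<dots> = - syndrome_stats n f c"
    using y(1,2) by (simp add: syndrome_stats_translate comm_commute[of n c])
  finally show ?thesis
    by simp
qed

lemma syndrome_stats_cong_local:
  assumes "\<forall>e. \<not> psupp e \<subseteq> \<gamma> \<longrightarrow> p e = 0" and "\<forall>i\<in>\<gamma>. a i = b i"
  shows "syndrome_stats n p a = syndrome_stats n p b"
  unfolding syndrome_stats_def
proof (intro sum.cong refl)
  fix e
  show "comm n a e * p e = comm n b e * p e"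
  proof (cases "psupp e \<subseteq> \<gamma>")
    case True
    with assms(2) have "comm n a e = comm n b e"
      by (subst (1 2) comm_commute) (auto intro: comm_cong_psupp)
    then show ?thesis by simp
  qed (use assms(1) in simp)
qed

lemma syndrome_stats_conv_family:
  assumes fin: "finite \<Gamma>"
  shows "syndrome_stats n (conv_family n \<Gamma> Q) a = (\<Prod>\<gamma>\<in>\<Gamma>. syndrome_stats n (Q \<gamma>) a)"
proof -
  let ?F = "PiE \<Gamma> (\<lambda>_. paulis n)"
  have "syndrome_stats n (conv_family n \<Gamma> Q) a
      = (\<Sum>f\<in>?F. \<Sum>e\<in>paulis n.
           if pprod \<Gamma> f = e then comm n a e * (\<Prod>\<gamma>\<in>\<Gamma>. Q \<gamma> (f \<gamma>)) else 0)"
    unfolding syndrome_stats_def conv_family_def sum_distrib_left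
    by (subst sum.swap) (simp add: if_distrib cong: if_cong)
  also have "\<dots> = (\<Sum>f\<in>?F. comm n a (pprod \<Gamma> f) * (\<Prod>\<gamma>\<in>\<Gamma>. Q \<gamma> (f \<gamma>)))"
    by (intro sum.cong) (simp_all add: pprod_in_paulis PiE_iff)
  also have "\<dots> = (\<Sum>f\<in>?F. \<Prod>\<gamma>\<in>\<Gamma>. comm n a (f \<gamma>) * Q \<gamma> (f \<gamma>))"
    by (simp add: comm_pprod fin prod.distrib)
  also have "\<dots> = (\<Prod>\<gamma>\<in>\<Gamma>. syndrome_stats n (Q \<gamma>) a)"
    unfolding syndrome_stats_def by (rule prod_sum_PiE[symmetric]) (simp_all add: fin)
  finally show ?thesis .
qed

lemma syndrome_stats_ge:
  assumes "prob_dist n p"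
  shows "2 * p pI - 1 \<le> syndrome_stats n p a"
proof -
  have nonneg: "\<And>e. p e \<ge> 0" and total: "(\<Sum>e\<in>paulis n. p e) = 1"
    using assms by (auto simp: prob_dist_def)
  have split: "(\<Sum>e\<in>paulis n. g e) = g pI + (\<Sum>e\<in>paulis n - {pI}. g e)" for g
    by (simp add: sum.remove)
  have "- (\<Sum>e\<in>paulis n - {pI}. p e) \<le> (\<Sum>e\<in>paulis n - {pI}. comm n a e * p e)"
    unfolding sum_negf[symmetric]
  proof (intro sum_mono)
    fix e
    from comm_cases[of n a e] nonneg[of e] show "- p e \<le> comm n a e * p e"
      by auto
  qed
  then show ?thesis
    using split[of p] split[of "\<lambda>e. comm n a e * p e"] total
    by (simp add: syndrome_stats_def)
qed

lemma logical_channel_eqI: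
  assumes G: "pauli_subgroup n G" and e: "e \<in> paulis n"
    and stats: "\<forall>c\<in>perp n G. syndrome_stats n P c = syndrome_stats n P' c"
  shows "logical_channel G P e = logical_channel G P' e"
proof -
  have "real (card (paulis n)) * (\<Sum>g\<in>G. P (pmult e g))
      = real (card (paulis n)) * (\<Sum>g\<in>G. P' (pmult e g))"
    using stats e by (simp add: poisson_summation[OF G] syndrome_stats_translate)
  then show ?thesis
    by (simp add: logical_channel_def)
qed

lemma sum_eq_0_if_coset_invariant:
  fixes \<beta> \<phi> :: "pauli \<Rightarrow> real"
  assumes D: "pauli_subgroup n D"
    and cosets: "\<And>c. c \<in> paulis n \<Longrightarrow> (\<Sum>d\<in>D. \<beta> (pmult c d)) = 0"
    and invariant: "\<And>c d. c \<in> paulis n \<Longrightarrow> d \<in> D \<Longrightarrow> \<phi> (pmult c d) = \<phi> c"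
  shows "(\<Sum>c\<in>paulis n. \<beta> c * \<phi> c) = 0"
proof -
  have DP: "D \<subseteq> paulis n"
    using D by (simp add: pauli_subgroup_def)
  have "real (card D) * (\<Sum>c\<in>paulis n. \<beta> c * \<phi> c) = (\<Sum>d\<in>D. \<Sum>c\<in>paulis n. \<beta> c * \<phi> c)"
    by simp
  also have "\<dots> = (\<Sum>d\<in>D. \<Sum>c\<in>paulis n. \<beta> (pmult d c) * \<phi> (pmult d c))"
  proof (rule sum.cong[OF refl])
    fix d assume "d \<in> D"
    with DP show "(\<Sum>c\<in>paulis n. \<beta> c * \<phi> c) = (\<Sum>c\<in>paulis n. \<beta> (pmult d c) * \<phi> (pmult d c))"
      by (simp add: sum_subgroup_shift[OF pauli_subgroup_paulis, where g = "\<lambda>c. \<beta> c * \<phi> c"] subsetD)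
  qed
  also have "\<dots> = (\<Sum>c\<in>paulis n. \<phi> c * (\<Sum>d\<in>D. \<beta> (pmult c d)))"
    unfolding sum_distrib_left
    by (subst sum.swap) (intro sum.cong refl, simp add: invariant pmult_commute)
  also have "\<dots> = 0"
    by (simp add: cosets)
  finally show ?thesis
    using pauli_subgroup_card_pos[OF D] by simp
qed

lemma sum_eq_0_if_coset_consistent:
  fixes \<beta> \<chi> :: "pauli \<Rightarrow> real"
  assumes D: "pauli_subgroup n D"
    and cosets: "\<And>c. c \<in> paulis n \<Longrightarrow> (\<Sum>d\<in>D. \<beta> (pmult c d)) = 0"
    and consistent: "\<And>c c'. c \<in> paulis n \<Longrightarrow> c' \<in> paulis n \<Longrightarrow> \<beta> c \<noteq> 0 \<Longrightarrow> \<beta> c' \<noteq> 0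
                       \<Longrightarrow> pmult c c' \<in> D \<Longrightarrow> \<chi> c = \<chi> c'"
  shows "(\<Sum>c\<in>paulis n. \<beta> c * \<chi> c) = 0"
proof -
  define R where "R c c' \<longleftrightarrow> c' \<in> paulis n \<and> \<beta> c' \<noteq> 0 \<and> pmult c c' \<in> D" for c c'
  (* phi reads chi off some point of the support of beta in the D-coset of c: it is
     D-invariant, and by consistency it agrees with chi on the support of beta. *)
  define \<phi> where "\<phi> c = (if \<exists>c'. R c c' then \<chi> (SOME c'. R c c') else 0)" for c
  have agree: "\<beta> c * \<chi> c = \<beta> c * \<phi> c" if c: "c \<in> paulis n" for c
  proof (cases "\<beta> c = 0")
    case False
    with c D have "R c c"
      by (simp add: R_def pauli_subgroup_def)
    then have "R c (SOME c'. R c c')" and "\<phi> c = \<chi> (SOME c'. R c c')"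
      by (auto simp: \<phi>_def intro: someI[of "R c"])
    with c False show ?thesis
      by (auto simp: R_def intro: consistent)
  qed simp
  have invariant: "\<phi> (pmult c d) = \<phi> c" if "d \<in> D" for c d
  proof -
    have closed: "pmult d x \<in> D \<longleftrightarrow> x \<in> D" for x
      using D \<open>d \<in> D\<close> pmult_cancel_left[of d x] unfolding pauli_subgroup_def by metis
    have assoc: "pmult (pmult c d) c' = pmult d (pmult c c')" for c'
      by (auto simp: pmult_def)
    have "R (pmult c d) c' \<longleftrightarrow> R c c'" for c'
      by (simp add: R_def assoc closed)
    then have "R (pmult c d) = R c"
      by blast
    then show ?thesis
      by (simp add: \<phi>_def)
  qed
  have "(\<Sum>c\<in>paulis n. \<beta> c * \<chi> c) = (\<Sum>c\<in>paulis n. \<beta> c * \<phi> c)"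
    using agree by (rule sum.cong[OF refl])
  also have "\<dots> = 0"
    using D cosets invariant by (rule sum_eq_0_if_coset_invariant)
  finally show ?thesis .
qed

lemma mem_gauge_if_weight_lt_distance:
  assumes "a \<in> dressed n G" "enat (pweight a) < code_distance n G"
  shows "a \<in> G"
proof (rule ccontr)
  assume "a \<notin> G"
  with assms(1) have "code_distance n G \<le> enat (pweight a)"
    unfolding code_distance_def by (intro INF_lower) simp
  with assms(2) show False
    by simp
qed

lemma syndrome_stats_coset_sum_eq_0:
  assumes H: "pauli_subgroup n H" and vanish: "\<forall>s\<in>H. f s = 0"
  shows "(\<Sum>d\<in>perp n H. syndrome_stats n f (pmult c d)) = 0"
proof -
  have "real (card H) * (\<Sum>d\<in>perp n H. syndrome_stats n f (pmult c d))
      = real (card (paulis n)) * (\<Sum>s\<in>H. comm n c s * f s)"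
    using poisson_summation[OF H, of "\<lambda>s. comm n c s * f s"]
    by (simp add: syndrome_stats_modulate pmult_commute)
  also have "\<dots> = 0"
    using vanish by simp
  finally show ?thesis
    using pauli_subgroup_card_pos[OF H] by simp
qed

lemma comm_perp_eq_if_close:
  assumes a: "a \<in> perp n G" and dressed: "pmult c c' \<in> dressed n G"
    and c: "psupp c \<subseteq> \<gamma>" "finite \<gamma>" "enat (2 * card \<gamma> + 1) \<le> code_distance n G"
    and c': "psupp c' \<subseteq> \<gamma>'" "finite \<gamma>'" "enat (2 * card \<gamma>' + 1) \<le> code_distance n G"
  shows "comm n c a = comm n c' a"
proof -
  have "psupp (pmult c c') \<subseteq> \<gamma> \<union> \<gamma>'"
    using psupp_pmult_subset c(1) c'(1) by blast
  with c(2) c'(2) have "pweight (pmult c c') \<le> card (\<gamma> \<union> \<gamma>')"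
    unfolding pweight_def by (intro card_mono) simp_all
  also have "\<dots> \<le> card \<gamma> + card \<gamma>'"
    by (rule card_Un_le)
  finally have "enat (pweight (pmult c c')) < enat (max (2 * card \<gamma> + 1) (2 * card \<gamma>' + 1))"
    by simp
  also have "\<dots> \<le> code_distance n G"
    using c(3) c'(3) by (simp add: max_def)
  finally have "enat (pweight (pmult c c')) < code_distance n G" .
  with dressed have "pmult c c' \<in> G"
    by (rule mem_gauge_if_weight_lt_distance)
  with a have "comm n c a * comm n c' a = 1"
    by (simp add: perp_def comm_commute[of n a] comm_pmult_left[symmetric])
  then show ?thesis
    using comm_cases[of n c a] comm_cases[of n c' a] by auto
qed

lemma local_sum_eq_0_on_perp:
  fixes h :: "nat set \<Rightarrow> pauli \<Rightarrow> real"
  assumes G: "pauli_subgroup n G"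
    and \<Gamma>: "\<Gamma> \<subseteq> Pow {..<n}"
    and dist: "\<forall>\<gamma>\<in>\<Gamma>. enat (2 * card \<gamma> + 1) \<le> code_distance n G"
    and local: "\<And>\<gamma> a b. \<gamma> \<in> \<Gamma> \<Longrightarrow> \<forall>i\<in>\<gamma>. a i = b i \<Longrightarrow> h \<gamma> a = h \<gamma> b"
    and stab: "\<forall>s\<in>stabilizer n G. (\<Sum>\<gamma>\<in>\<Gamma>. h \<gamma> s) = 0"
    and a: "a \<in> perp n G"
  shows "(\<Sum>\<gamma>\<in>\<Gamma>. h \<gamma> a) = 0"
proof -
  define L where "L = (\<lambda>x. \<Sum>\<gamma>\<in>\<Gamma>. h \<gamma> x)"
  define \<beta> where "\<beta> = syndrome_stats n L"
  have local_support: "\<exists>\<gamma>\<in>\<Gamma>. psupp c \<subseteq> \<gamma>" if "c \<in> paulis n" "\<beta> c \<noteq> 0" for c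
  proof (rule ccontr)
    assume "\<not> (\<exists>\<gamma>\<in>\<Gamma>. psupp c \<subseteq> \<gamma>)"
    with that(1) have "syndrome_stats n (h \<gamma>) c = 0" if "\<gamma> \<in> \<Gamma>" for \<gamma>
      using that by (intro syndrome_stats_eq_0_if_local[of \<gamma>] local) auto
    then have "\<beta> c = 0"
      by (simp add: \<beta>_def L_def syndrome_stats_sum)
    with that(2) show False ..
  qed
  have cosets: "(\<Sum>d\<in>dressed n G. \<beta> (pmult c d)) = 0" for c
    using pauli_subgroup_stabilizer[OF G] stab unfolding \<beta>_def dressed_def L_def
    by (rule syndrome_stats_coset_sum_eq_0)
  have consistent: "comm n c a = comm n c' a"
    if "c \<in> paulis n" "c' \<in> paulis n" "\<beta> c \<noteq> 0" "\<beta> c' \<noteq> 0" "pmult c c' \<in> dressed n G"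
    for c c'
  proof -
    from that obtain \<gamma> \<gamma>' where "\<gamma> \<in> \<Gamma>" "psupp c \<subseteq> \<gamma>" "\<gamma>' \<in> \<Gamma>" "psupp c' \<subseteq> \<gamma>'"
      using local_support by meson
    with \<Gamma> dist a that(5) show ?thesis
      by (intro comm_perp_eq_if_close[of a]) (auto intro: finite_subset[of _ "{..<n}"])
  qed
  have "real (card (paulis n)) * L a = (\<Sum>c\<in>paulis n. \<beta> c * comm n c a)"
    using syndrome_stats_inversion[OF subsetD[OF perp_subset_paulis a]] by (simp add: \<beta>_def)
  also have "\<dots> = 0"
    using pauli_subgroup_perp cosets consistent unfolding dressed_def
    by (rule sum_eq_0_if_coset_consistent)
  finally show ?thesis
    by (simp add: L_def)
qed

lemma local_prod_eq_on_perp: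
  fixes F F' :: "nat set \<Rightarrow> pauli \<Rightarrow> real"
  assumes G: "pauli_subgroup n G"
    and \<Gamma>: "\<Gamma> \<subseteq> Pow {..<n}"
    and dist: "\<forall>\<gamma>\<in>\<Gamma>. enat (2 * card \<gamma> + 1) \<le> code_distance n G"
    and pos: "\<And>\<gamma> x. \<gamma> \<in> \<Gamma> \<Longrightarrow> F \<gamma> x > 0"
      "\<And>\<gamma> x. \<gamma> \<in> \<Gamma> \<Longrightarrow> F' \<gamma> x > 0"
    and local: "\<And>\<gamma> x y. \<gamma> \<in> \<Gamma> \<Longrightarrow> \<forall>i\<in>\<gamma>. x i = y i \<Longrightarrow> F \<gamma> x = F \<gamma> y"
      "\<And>\<gamma> x y. \<gamma> \<in> \<Gamma> \<Longrightarrow> \<forall>i\<in>\<gamma>. x i = y i \<Longrightarrow> F' \<gamma> x = F' \<gamma> y"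
    and stab: "\<forall>s\<in>stabilizer n G. (\<Prod>\<gamma>\<in>\<Gamma>. F \<gamma> s) = (\<Prod>\<gamma>\<in>\<Gamma>. F' \<gamma> s)"
    and a: "a \<in> perp n G"
  shows "(\<Prod>\<gamma>\<in>\<Gamma>. F \<gamma> a) = (\<Prod>\<gamma>\<in>\<Gamma>. F' \<gamma> a)"
proof -
  have "finite \<Gamma>"
    using \<Gamma> finite_subset by blast
  then have ln_quotient: "(\<Sum>\<gamma>\<in>\<Gamma>. ln (F \<gamma> x) - ln (F' \<gamma> x))
                          = ln (\<Prod>\<gamma>\<in>\<Gamma>. F \<gamma> x) - ln (\<Prod>\<gamma>\<in>\<Gamma>. F' \<gamma> x)" for x
    using pos by (simp add: sum_subtractf ln_prod less_imp_neq[symmetric])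
  have "(\<Sum>\<gamma>\<in>\<Gamma>. ln (F \<gamma> a) - ln (F' \<gamma> a)) = 0"
    using G \<Gamma> dist _ _ a
  proof (rule local_sum_eq_0_on_perp)
    show "ln (F \<gamma> x) - ln (F' \<gamma> x) = ln (F \<gamma> y) - ln (F' \<gamma> y)"
      if "\<gamma> \<in> \<Gamma>" "\<forall>i\<in>\<gamma>. x i = y i" for \<gamma> x y
      using local(1)[OF that] local(2)[OF that] by simp
    show "\<forall>s\<in>stabilizer n G. (\<Sum>\<gamma>\<in>\<Gamma>. ln (F \<gamma> s) - ln (F' \<gamma> s)) = 0"
      using stab by (simp add: ln_quotient)
  qed
  moreover have "(\<Prod>\<gamma>\<in>\<Gamma>. F \<gamma> a) > 0" "(\<Prod>\<gamma>\<in>\<Gamma>. F' \<gamma> a) > 0"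
    using pos by (simp_all add: prod_pos)
  ultimately show ?thesis
    by (simp add: ln_quotient)
qed

theorem corollary1:
  fixes n :: nat and G :: "pauli set" and \<Gamma> :: "nat set set"
    and Q Q' :: "nat set \<Rightarrow> pauli \<Rightarrow> real"
  assumes "pauli_subgroup n G"
    and "\<Gamma> \<subseteq> Pow {..<n}"
    and "\<forall>\<gamma>\<in>\<Gamma>. enat (2 * card \<gamma> + 1) \<le> code_distance n G"
    and "local_family n \<Gamma> Q" and "local_family n \<Gamma> Q'"
    and "\<forall>s\<in>stabilizer n G. syndrome_stats n (conv_family n \<Gamma> Q) s
                          = syndrome_stats n (conv_family n \<Gamma> Q') s"
  shows "\<forall>e\<in>paulis n. logical_channel G (conv_family n \<Gamma> Q) e
                    = logical_channel G (conv_family n \<Gamma> Q') e"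
proof -
  have fin: "finite \<Gamma>"
    using assms(2) finite_subset by blast
  have pos: "syndrome_stats n (R \<gamma>) x > 0" if "local_family n \<Gamma> R" "\<gamma> \<in> \<Gamma>" for R \<gamma> x
    using that syndrome_stats_ge[of n "R \<gamma>" x] by (auto simp: local_family_def)
  have local: "syndrome_stats n (R \<gamma>) x = syndrome_stats n (R \<gamma>) y"
    if "local_family n \<Gamma> R" "\<gamma> \<in> \<Gamma>" "\<forall>i\<in>\<gamma>. x i = y i" for R \<gamma> x y
    using that by (intro syndrome_stats_cong_local[of \<gamma>]) (auto simp: local_family_def)
  have "syndrome_stats n (conv_family n \<Gamma> Q) c = syndrome_stats n (conv_family n \<Gamma> Q') c"
    if "c \<in> perp n G" for c
    unfolding syndrome_stats_conv_family[OF fin]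
    using assms(1-3) pos[OF assms(4)] pos[OF assms(5)] local[OF assms(4)] local[OF assms(5)] _ that
  proof (rule local_prod_eq_on_perp)
    show "\<forall>s\<in>stabilizer n G.
            (\<Prod>\<gamma>\<in>\<Gamma>. syndrome_stats n (Q \<gamma>) s) = (\<Prod>\<gamma>\<in>\<Gamma>. syndrome_stats n (Q' \<gamma>) s)"
      using assms(6) by (simp add: syndrome_stats_conv_family[OF fin])
  qed
  with assms(1) show ?thesis
    by (blast intro: logical_channel_eqI)
qed

end
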